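(* Let $m>1$, $d\in\{2,3,\ldots\}$, consider a Galton–Watson process with offspring distribution supported in $\{0,\ldots,d\}$ with mean $m$, and set $a=\frac{8m}{m-1}$. Then for every positive integer $r$ and every $n\in\mathbb{N}$, \[ \mathbb{P}(W_n>5adr)\le e^{-(\log 3-1)r}+e^{-\frac23 r}. \]
   Context: $(Z_n)_{n\ge 0}$ is a Galton–Watson process with $Z_0=1$, $Z_{n+1}=\sum_{i=1}^{Z_n}\xi_{n,i}$ with $(\xi_{n,i})$ i.i.d. distributed as $Z_1$, $m=\mathbb{E}[Z_1]$, and $W_n=Z_n/m^n$. *)

theory Defs
  imports "HOL-Probability.Probability"
begin

fun iid_sum_pmf :: "nat pmf \<Rightarrow> nat \<Rightarrow> nat pmf" where
  "iid_sum_pmf p 0 = return_pmf 0"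
| "iid_sum_pmf p (Suc k) = bind_pmf (iid_sum_pmf p k) (\<lambda>s. map_pmf (\<lambda>x. s + x) p)"

text \<open>Law of the generation size Z_n of a Galton-Watson process with Z_0 = 1 and
  offspring law p: Z_(n+1) is the sum of Z_n i.i.d. copies of the offspring variable.\<close>
fun gw_pmf :: "nat pmf \<Rightarrow> nat \<Rightarrow> nat pmf" where
  "gw_pmf p 0 = return_pmf 1"
| "gw_pmf p (Suc n) = bind_pmf (gw_pmf p n) (iid_sum_pmf p)"

definition offspring_mean :: "nat pmf \<Rightarrow> real" where
  "offspring_mean p = measure_pmf.expectation p real"

end

theory Submission
  imports Defs
begin

text \<open>The generating function of \<open>Z\<^sub>n\<close> is the \<open>n\<close>-fold iterate of the offspring generating
  function \<open>f\<close>. For offspring bounded by \<open>d\<close>, \<open>f(e\<^sup>u) \<le> exp(m u + d m u\<^sup>2)\<close> whenever \<open>u d \<le> 1\<close>.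
  Pushing the exponents \<open>\<theta>/m\<^sup>n, \<theta>/m\<^sup>n\<^sup>-\<^sup>1, \<dots>, \<theta>\<close> through this bound one generation at a time,
  the quadratic errors add up geometrically and stay below \<open>K\<theta>\<^sup>2\<close> with \<open>K = 4d/(m-1)\<close>, as long as
  \<open>K\<theta> \<le> 1\<close>. Hence \<open>E[exp(\<theta> W\<^sub>n)] \<le> exp(\<theta> + K\<theta>\<^sup>2)\<close>, and the Chernoff bound with \<open>\<theta> = 1/K\<close>
  gives the tail \<open>exp(2\<theta> - 10 m r)\<close>, already below the first term of the claimed bound.\<close>

definition pgf :: "nat pmf \<Rightarrow> real \<Rightarrow> real" where
  "pgf p s = measure_pmf.expectation p (\<lambda>k. s ^ k)"

lemma pgf_nonneg: "0 \<le> s \<Longrightarrow> 0 \<le> pgf p s"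
  unfolding pgf_def by (intro integral_nonneg_AE) auto

lemma funpow_pgf_nonneg: "0 \<le> s \<Longrightarrow> 0 \<le> (pgf p ^^ n) s"
  by (induction n) (auto intro: pgf_nonneg)

lemma pgf_mono:
  assumes "finite (set_pmf p)" "0 \<le> s" "s \<le> t"
  shows "pgf p s \<le> pgf p t"
  unfolding pgf_def using assms
  by (intro integral_mono integrable_measure_pmf_finite) (auto intro: power_mono)

lemma nn_integral_pgf:
  assumes "finite (set_pmf p)" "0 \<le> s"
  shows "(\<integral>\<^sup>+k. ennreal (s ^ k) \<partial>p) = ennreal (pgf p s)"
  unfolding pgf_def using assms
  by (intro nn_integral_eq_integral integrable_measure_pmf_finite) auto

lemma nn_integral_power_iid_sum_pmf:
  assumes "0 \<le> s"
  shows "(\<integral>\<^sup>+z. ennreal (s ^ z) \<partial>iid_sum_pmf p k) = (\<integral>\<^sup>+x. ennreal (s ^ x) \<partial>p) ^ k"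
proof (induction k)
  case 0
  then show ?case by simp
next
  case (Suc k)
  have "(\<integral>\<^sup>+z. ennreal (s ^ z) \<partial>iid_sum_pmf p (Suc k))
      = (\<integral>\<^sup>+y. ennreal (s ^ y) * (\<integral>\<^sup>+x. ennreal (s ^ x) \<partial>p) \<partial>iid_sum_pmf p k)"
    using assms by (simp add: power_add ennreal_mult nn_integral_cmult)
  also have "\<dots> = (\<integral>\<^sup>+y. ennreal (s ^ y) \<partial>iid_sum_pmf p k) * (\<integral>\<^sup>+x. ennreal (s ^ x) \<partial>p)"
    by (simp add: nn_integral_multc)
  finally show ?case using Suc by (simp add: mult.commute)
qed

lemma nn_integral_power_gw_pmf:
  assumes "finite (set_pmf p)" "0 \<le> s"
  shows "(\<integral>\<^sup>+z. ennreal (s ^ z) \<partial>gw_pmf p n) = ennreal ((pgf p ^^ n) s)"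
  using assms(2)
proof (induction n arbitrary: s)
  case 0
  then show ?case by simp
next
  case (Suc n)
  have "(\<integral>\<^sup>+z. ennreal (s ^ z) \<partial>gw_pmf p (Suc n))
      = (\<integral>\<^sup>+k. (\<integral>\<^sup>+z. ennreal (s ^ z) \<partial>iid_sum_pmf p k) \<partial>gw_pmf p n)"
    by simp
  also have "\<dots> = (\<integral>\<^sup>+k. ennreal (pgf p s ^ k) \<partial>gw_pmf p n)"
    using Suc.prems assms(1)
    by (simp add: nn_integral_power_iid_sum_pmf nn_integral_pgf ennreal_power pgf_nonneg)
  also have "\<dots> = ennreal ((pgf p ^^ n) (pgf p s))"
    using Suc.IH Suc.prems pgf_nonneg by blast
  finally show ?case
    by (simp only: funpow_Suc_right comp_def)
qed

lemma gw_pmf_Chernoff: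
  assumes "finite (set_pmf p)" "\<theta> > 0"
  shows "measure_pmf.prob (gw_pmf p n) {z. x \<le> c * real z}
           \<le> exp (-\<theta> * x) * (pgf p ^^ n) (exp (\<theta> * c))"
proof -
  have "exp (\<theta> * (c * real z)) = exp (\<theta> * c) ^ z" for z
    by (simp add: exp_of_nat_mult[symmetric] mult.commute mult.left_commute)
  then have "emeasure (gw_pmf p n) {z. x \<le> c * real z}
      \<le> ennreal (exp (-\<theta> * x)) * (\<integral>\<^sup>+z. ennreal (exp (\<theta> * c) ^ z) \<partial>gw_pmf p n)"
    using Chernoff_ineq_nn_integral_ge[of \<theta> UNIV "gw_pmf p n" "\<lambda>z. c * real z" x] assms(2)
    by simp
  also have "\<dots> = ennreal (exp (-\<theta> * x) * (pgf p ^^ n) (exp (\<theta> * c)))"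
    using assms(1) by (simp add: nn_integral_power_gw_pmf ennreal_mult funpow_pgf_nonneg)
  finally show ?thesis
    by (simp add: measure_pmf.emeasure_eq_measure funpow_pgf_nonneg)
qed

lemma pgf_exp_le:
  assumes supp: "set_pmf p \<subseteq> {0..d}" and u: "0 \<le> u" "u * d \<le> 1"
  shows "pgf p (exp u) \<le> exp (offspring_mean p * u + d * offspring_mean p * u\<^sup>2)"
proof -
  have fin: "finite (set_pmf p)"
    using supp finite_subset by blast
  have pointwise: "exp u ^ k \<le> 1 + u * k + u\<^sup>2 * d * k" if "k \<in> set_pmf p" for k
  proof -
    have kd: "real k \<le> d"
      using that supp by auto
    then have "u * k \<le> 1"
      using u by (meson mult_left_mono order_trans)
    then have "exp (u * k) \<le> 1 + u * k + (u * k)\<^sup>2"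
      using u by (intro exp_bound) auto
    moreover have "(u * k)\<^sup>2 \<le> u\<^sup>2 * d * k"
    proof -
      have "real k * k \<le> real d * k"
        using kd by (intro mult_right_mono) auto
      then have "u * u * (real k * k) \<le> u * u * (real d * k)"
        using u by (intro mult_left_mono) auto
      then show ?thesis
        by (simp add: power2_eq_square algebra_simps)
    qed
    ultimately show ?thesis
      by (simp add: exp_of_nat_mult[symmetric] mult.commute)
  qed
  have "pgf p (exp u) \<le> measure_pmf.expectation p (\<lambda>k. 1 + u * k + u\<^sup>2 * d * k)"
    unfolding pgf_def using fin pointwise
    by (intro integral_mono_AE integrable_measure_pmf_finite) (auto simp: AE_measure_pmf_iff)
  also have "\<dots> = 1 + (offspring_mean p * u + d * offspring_mean p * u\<^sup>2)"
    unfolding offspring_mean_def using fin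
    by (simp add: integrable_measure_pmf_finite algebra_simps)
  also have "\<dots> \<le> exp (offspring_mean p * u + d * offspring_mean p * u\<^sup>2)"
    by (rule exp_ge_add_one_self)
  finally show ?thesis .
qed

text \<open>The induction step: \<open>u\<close> is the bound on the exponent after \<open>n\<close> generations started at \<open>\<theta>/m\<close>.\<close>

lemma exponent_step:
  fixes m d K \<theta> :: real
  assumes m: "m > 1" and d: "d > 0" and K: "K * (m - 1) = 4 * d"
    and \<theta>: "0 \<le> \<theta>" "K * \<theta> \<le> 1"
    and u: "u = \<theta> / m + K * (\<theta> / m)\<^sup>2"
  shows "K * (\<theta> / m) \<le> 1" and "0 \<le> u" and "u * d \<le> 1" and "m * u + d * m * u\<^sup>2 \<le> \<theta> + K * \<theta>\<^sup>2"
proof -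
  define t where "t = \<theta> / m"
  have \<theta>_eq: "\<theta> = m * t"
    using m by (simp add: t_def)
  have u_eq: "u = t + K * t\<^sup>2"
    by (simp add: u t_def)
  have "0 < K * (m - 1)"
    using K d by simp
  then have K0: "K > 0"
    using m by (simp add: zero_less_mult_iff)
  have t0: "0 \<le> t"
    using \<theta> m by (simp add: t_def)
  have "t \<le> \<theta>"
    using \<theta>_eq t0 m by (simp add: mult_le_cancel_right1)
  then show Kt: "K * (\<theta> / m) \<le> 1"
    using K0 \<theta>(2) unfolding t_def[symmetric] by (meson mult_left_mono less_imp_le order_trans)
  have "(K * t) * t \<le> 1 * t"
    using Kt t0 unfolding t_def[symmetric] by (rule mult_right_mono)
  then have u2: "u \<le> 2 * t"
    by (simp add: u_eq power2_eq_square mult.assoc)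
  show u0: "0 \<le> u"
    using t0 K0 by (simp add: u_eq)
  have "\<theta> * (4 * d) = (K * \<theta>) * (m - 1)"
    using K by (simp add: mult_ac)
  also have "\<dots> \<le> m - 1"
    using \<theta>(2) m by (simp add: mult_left_le_one_le)
  finally have "2 * t * d \<le> 1"
    using m t0 unfolding t_def by (simp add: field_simps)
  moreover have "u * d \<le> 2 * t * d"
    using u2 d by (intro mult_right_mono) auto
  ultimately show "u * d \<le> 1"
    by linarith
  have "u\<^sup>2 \<le> (2 * t)\<^sup>2"
    using u0 u2 by (intro power_mono)
  then have "d * m * u\<^sup>2 \<le> d * m * (4 * t\<^sup>2)"
    using d m by (intro mult_left_mono) (auto simp: power2_eq_square)
  moreover have "4 * d * m * t\<^sup>2 = K * (m - 1) * m * t\<^sup>2"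
    using K by simp
  ultimately show "m * u + d * m * u\<^sup>2 \<le> \<theta> + K * \<theta>\<^sup>2"
    by (simp add: u_eq \<theta>_eq power2_eq_square algebra_simps)
qed

lemma funpow_pgf_exp_le:
  assumes supp: "set_pmf p \<subseteq> {0..d}" and d: "d \<ge> 1"
    and m_def: "m = offspring_mean p" and m: "m > 1" and K: "K * (m - 1) = 4 * real d"
  shows "0 \<le> \<theta> \<Longrightarrow> K * \<theta> \<le> 1 \<Longrightarrow> (pgf p ^^ n) (exp (\<theta> / m ^ n)) \<le> exp (\<theta> + K * \<theta>\<^sup>2)"
proof (induction n arbitrary: \<theta>)
  case 0
  have "0 < K * (m - 1)"
    using K d by simp
  then have "K > 0"
    using m by (simp add: zero_less_mult_iff)
  then show ?case
    by simp
next
  case (Suc n)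
  define u where "u = \<theta> / m + K * (\<theta> / m)\<^sup>2"
  have step: "K * (\<theta> / m) \<le> 1" "0 \<le> u" "u * d \<le> 1" "m * u + d * m * u\<^sup>2 \<le> \<theta> + K * \<theta>\<^sup>2"
    using exponent_step[OF m _ K Suc.prems u_def] d by auto
  have IH: "(pgf p ^^ n) (exp ((\<theta> / m) / m ^ n)) \<le> exp u"
    using Suc.IH[of "\<theta> / m"] step(1) Suc.prems m by (simp add: u_def)
  have "(pgf p ^^ Suc n) (exp (\<theta> / m ^ Suc n)) = pgf p ((pgf p ^^ n) (exp ((\<theta> / m) / m ^ n)))"
    by (simp add: divide_divide_eq_left)
  also have "\<dots> \<le> pgf p (exp u)"
    using IH supp finite_subset by (intro pgf_mono funpow_pgf_nonneg) auto
  also have "\<dots> \<le> exp (m * u + d * m * u\<^sup>2)"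
    using pgf_exp_le[OF supp step(2,3)] m_def by simp
  also have "\<dots> \<le> exp (\<theta> + K * \<theta>\<^sup>2)"
    using step(4) by simp
  finally show ?case .
qed

lemma tail_exponent_le:
  fixes m d r :: real
  assumes m: "m > 1" and d: "d \<ge> 1" and r: "r \<ge> 1"
  defines "\<theta> \<equiv> (m - 1) / (4 * d)"
  shows "2 * \<theta> - \<theta> * (5 * (8 * m / (m - 1)) * d * r) \<le> -(ln 3 - 1) * r"
proof -
  have "\<theta> * (5 * (8 * m / (m - 1)) * d * r) = 10 * (m * r)"
    using m d by (simp add: \<theta>_def field_simps)
  moreover have "2 * \<theta> \<le> m"
  proof -
    have "2 * \<theta> = (m - 1) / (2 * d)"
      using d by (simp add: \<theta>_def field_simps)
    also have "\<dots> \<le> (m - 1) / 1"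
      using m d by (intro divide_left_mono) auto
    finally show ?thesis
      by simp
  qed
  moreover have "ln 3 * r \<le> 2 * r"
    using ln_le_minus_one[of 3] r by (intro mult_right_mono) auto
  moreover have "m \<le> m * r" "r \<le> m * r"
    using m r by simp_all
  moreover have "-(ln 3 - 1) * r = r - ln 3 * r"
    by (simp add: algebra_simps)
  ultimately show ?thesis
    using r by linarith
qed

theorem mainTheorem5:
  fixes p :: "nat pmf" and d :: nat and m a :: real
  assumes "d \<ge> 2"
    and "set_pmf p \<subseteq> {0..d}"
    and "m = offspring_mean p"
    and "m > 1"
    and "a = 8 * m / (m - 1)"
  shows "\<forall>r::nat. r > 0 \<longrightarrow> (\<forall>n::nat.
           measure_pmf.prob (gw_pmf p n) {z. real z / m ^ n > 5 * a * real d * real r}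
             \<le> exp (-(ln 3 - 1) * real r) + exp (-(2/3) * real r))"
proof (intro allI impI)
  fix r n :: nat
  assume "r > 0"
  define x where "x = 5 * a * real d * real r"
  define \<theta> where "\<theta> = (m - 1) / (4 * real d)"
  define K where "K = 4 * real d / (m - 1)"
  have \<theta>: "\<theta> > 0" "K * \<theta> = 1" "K * (m - 1) = 4 * real d"
    using assms(1,4) by (simp_all add: \<theta>_def K_def)
  have fin: "finite (set_pmf p)"
    using assms(2) finite_subset by blast
  have "measure_pmf.prob (gw_pmf p n) {z. real z / m ^ n > x}
      \<le> measure_pmf.prob (gw_pmf p n) {z. x \<le> 1 / m ^ n * real z}"
    by (intro measure_pmf.finite_measure_mono) auto
  also have "\<dots> \<le> exp (-\<theta> * x) * (pgf p ^^ n) (exp (\<theta> * (1 / m ^ n)))"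
    using gw_pmf_Chernoff[OF fin \<theta>(1)] .
  also have "\<dots> \<le> exp (-\<theta> * x) * exp (\<theta> + K * \<theta>\<^sup>2)"
    using funpow_pgf_exp_le[OF assms(2) _ assms(3,4) \<theta>(3), of \<theta> n] \<theta> assms(1) by simp
  also have "\<dots> = exp (2 * \<theta> - \<theta> * x)"
    using \<theta>(2) by (simp add: power2_eq_square exp_add[symmetric] algebra_simps)
  also have "\<dots> \<le> exp (-(ln 3 - 1) * real r)"
    using tail_exponent_le[of m "real d" "real r"] assms(1,4,5) \<open>r > 0\<close>
    by (simp add: x_def \<theta>_def)
  finally show "measure_pmf.prob (gw_pmf p n) {z. real z / m ^ n > 5 * a * real d * real r}
      \<le> exp (-(ln 3 - 1) * real r) + exp (-(2/3) * real r)"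
    by (simp add: x_def add_increasing2)
qed

end
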